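(* Let $A:\mathbb{R}^n\to\mathbb{R}$ be smooth and $\mathbb{Z}^n$-periodic. Suppose $\phi_0,\phi_1$ are smooth $\mathbb{Z}^n$-periodic functions such that $u=\frac12|x|^2+\phi_0$ and $v=\frac12|x|^2+\phi_1$ are convex (with positive definite Hessians) and $$\sum_{i,j}\partial_i\partial_j u^{ij}=\sum_{i,j}\partial_i\partial_j v^{ij}=A.$$ Then $\phi_0=\phi_1+c$ for some constant $c$.
   Context: $(u^{ij})$, $(v^{ij})$ denote the inverses of the Hessian matrices of $u$, $v$. *)

theory Defs
  imports "HOL-Analysis.Analysis"
begin

definition partial :: "'n::finite \<Rightarrow> (real^'n \<Rightarrow> real) \<Rightarrow> real^'n \<Rightarrow> real" where
  "partial i f x = frechet_derivative f (at x) (axis i 1)"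

fun iter_partial :: "'n::finite list \<Rightarrow> (real^'n \<Rightarrow> real) \<Rightarrow> real^'n \<Rightarrow> real" where
  "iter_partial [] f = f"
| "iter_partial (i # is) f = partial i (iter_partial is f)"

definition smooth :: "(real^'n::finite \<Rightarrow> real) \<Rightarrow> bool" where
  "smooth f \<longleftrightarrow> (\<forall>is x. iter_partial is f differentiable (at x))"

definition int_vec :: "real^'n::finite \<Rightarrow> bool" where
  "int_vec k \<longleftrightarrow> (\<forall>i. k $ i \<in> \<int>)"

definition Zn_periodic :: "(real^'n::finite \<Rightarrow> real) \<Rightarrow> bool" where
  "Zn_periodic f \<longleftrightarrow> (\<forall>x k. int_vec k \<longrightarrow> f (x + k) = f x)"

definition hessian :: "(real^'n::finite \<Rightarrow> real) \<Rightarrow> real^'n \<Rightarrow> real^'n^'n" where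
  "hessian f x = (\<chi> i j. partial i (partial j f) x)"

definition pos_def :: "real^'n^'n::finite \<Rightarrow> bool" where
  "pos_def M \<longleftrightarrow> (\<forall>\<xi>. \<xi> \<noteq> 0 \<longrightarrow> \<xi> \<bullet> (M *v \<xi>) > 0)"

definition abreu_op :: "(real^'n::finite \<Rightarrow> real) \<Rightarrow> real^'n \<Rightarrow> real" where
  "abreu_op u x = (\<Sum>i\<in>UNIV. \<Sum>j\<in>UNIV.
      partial i (partial j (\<lambda>y. matrix_inv (hessian u y) $ i $ j)) x)"

end

theory Submission
  imports Defs
begin

(* Put w = \<phi>0 - \<phi>1 and \<Psi> = tr((D\<^sup>2u\<inverse> - D\<^sup>2v\<inverse>)(D\<^sup>2u - D\<^sup>2v)), where
   D\<^sup>2u - D\<^sup>2v = D\<^sup>2w.  Matrix inversion is strictly order-reversing on positive definite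
   matrices, so \<Psi> \<le> 0 with equality exactly where D\<^sup>2u = D\<^sup>2v.  Integrating by parts twice
   over a period cell, the integral of \<Psi> equals the integral of w times
   sum_{i,j} d_i d_j (u^{ij} - v^{ij}) = A - A = 0.  Hence \<Psi> vanishes, D\<^sup>2w = 0, and a periodic
   function with vanishing Hessian is constant. *)

section \<open>Partial derivatives and smooth functions\<close>

lemma partial_eq_derivative:
  "(f has_derivative f') (at x) \<Longrightarrow> partial i f x = f' (axis i 1)"
  unfolding partial_def by (drule frechet_derivative_at) simp

lemma has_derivative_frechet_derivative:
  "f differentiable (at x) \<Longrightarrow> (f has_derivative frechet_derivative f (at x)) (at x)"
  using frechet_derivative_works by blast

lemma has_derivative_partials:
  assumes "f differentiable (at x)"
  shows "(f has_derivative (\<lambda>h. \<Sum>k\<in>UNIV. h $ k * partial k f x)) (at x)"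
proof -
  let ?D = "frechet_derivative f (at x)"
  have D: "(f has_derivative ?D) (at x)"
    using has_derivative_frechet_derivative[OF assms] .
  then have lin: "bounded_linear ?D"
    using has_derivative_bounded_linear by blast
  have "?D h = (\<Sum>k\<in>UNIV. h $ k * partial k f x)" for h
  proof -
    have "h = (\<Sum>k\<in>UNIV. h $ k *\<^sub>R axis k 1)"
      by (simp add: vec_eq_iff axis_def if_distrib cong: if_cong)
    then have "?D h = ?D (\<Sum>k\<in>UNIV. h $ k *\<^sub>R axis k 1)"
      by simp
    also have "\<dots> = (\<Sum>k\<in>UNIV. h $ k * ?D (axis k 1))"
      using lin by (simp add: linear_simps linear_sum[OF bounded_linear.linear[OF lin]])
    finally show ?thesis
      by (simp add: partial_def)
  qed
  then have "?D = (\<lambda>h. \<Sum>k\<in>UNIV. h $ k * partial k f x)"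
    by (rule ext)
  then show ?thesis
    using D by simp
qed

lemma has_real_derivative_along_axis:
  assumes "\<And>x. f differentiable (at x)"
  shows "((\<lambda>s. f (y + s *\<^sub>R axis i 1)) has_real_derivative partial i f (y + s *\<^sub>R axis i 1)) (at s)"
proof -
  let ?z = "y + s *\<^sub>R axis i 1"
  let ?D = "frechet_derivative f (at ?z)"
  have D: "(f has_derivative ?D) (at ?z)"
    using assms has_derivative_frechet_derivative by blast
  have "((\<lambda>s. y + s *\<^sub>R axis i 1) has_derivative (\<lambda>h. h *\<^sub>R axis i 1)) (at s)"
    by (auto intro!: derivative_eq_intros)
  from has_derivative_compose[OF this D]
  have "((\<lambda>s. f (y + s *\<^sub>R axis i 1)) has_derivative (\<lambda>h. ?D (h *\<^sub>R axis i 1))) (at s)" .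
  moreover have "(\<lambda>h. ?D (h *\<^sub>R axis i 1)) = (*) (partial i f ?z)"
  proof
    fix h
    have "bounded_linear ?D"
      using D has_derivative_bounded_linear by blast
    then show "?D (h *\<^sub>R axis i 1) = partial i f ?z * h"
      by (simp add: partial_def linear_simps)
  qed
  ultimately show ?thesis
    by (simp add: has_field_derivative_def)
qed

lemma partial_const: "partial i (\<lambda>x::real^'n::finite. c) = (\<lambda>x. 0)"
proof
  fix x :: "real^'n"
  show "partial i (\<lambda>x. c) x = 0"
    using partial_eq_derivative[of "\<lambda>x::real^'n. c" "\<lambda>_. 0" x i] by simp
qed

lemma partial_add:
  assumes "\<And>x. f differentiable (at x)" and "\<And>x. g differentiable (at x)"
  shows "partial i (\<lambda>x. f x + g x) = (\<lambda>x. partial i f x + partial i g x)"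
proof
  fix x
  show "partial i (\<lambda>x. f x + g x) x = partial i f x + partial i g x"
    using partial_eq_derivative[OF has_derivative_add[OF
          has_derivative_frechet_derivative[OF assms(1)] has_derivative_frechet_derivative[OF assms(2)]]]
    by (simp add: partial_def)
qed

lemma partial_diff:
  assumes "\<And>x. f differentiable (at x)" and "\<And>x. g differentiable (at x)"
  shows "partial i (\<lambda>x. f x - g x) = (\<lambda>x. partial i f x - partial i g x)"
proof
  fix x
  show "partial i (\<lambda>x. f x - g x) x = partial i f x - partial i g x"
    using partial_eq_derivative[OF has_derivative_diff[OF
          has_derivative_frechet_derivative[OF assms(1)] has_derivative_frechet_derivative[OF assms(2)]]]
    by (simp add: partial_def)
qed

lemma partial_mult:
  assumes "\<And>x. f differentiable (at x)" and "\<And>x. g differentiable (at x)"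
  shows "partial i (\<lambda>x. f x * g x) = (\<lambda>x. partial i f x * g x + f x * partial i g x)"
proof
  fix x
  show "partial i (\<lambda>x. f x * g x) x = partial i f x * g x + f x * partial i g x"
    using partial_eq_derivative[OF has_derivative_mult[OF
          has_derivative_frechet_derivative[OF assms(1)] has_derivative_frechet_derivative[OF assms(2)]]]
    by (simp add: partial_def)
qed

lemma partial_inverse:
  assumes "\<And>x. f differentiable (at x)" and "\<And>x. f x \<noteq> 0"
  shows "partial i (\<lambda>x. inverse (f x)) = (\<lambda>x. - partial i f x * (inverse (f x) * inverse (f x)))"
proof
  fix x
  show "partial i (\<lambda>x. inverse (f x)) x = - partial i f x * (inverse (f x) * inverse (f x))"
    using partial_eq_derivative[OF Deriv.has_derivative_inverse[OF assms(2)
          has_derivative_frechet_derivative[OF assms(1)]]]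
    by (simp add: partial_def algebra_simps)
qed

lemma partial_coord: "partial i (\<lambda>x::real^'n::finite. x $ k) = (\<lambda>x. if i = k then 1 else 0)"
proof
  fix x :: "real^'n"
  have "((\<lambda>x::real^'n. x $ k) has_derivative (\<lambda>h. h $ k)) (at x)"
    by (simp add: bounded_linear_imp_has_derivative bounded_linear_vec_nth)
  from partial_eq_derivative[OF this]
  show "partial i (\<lambda>x. x $ k) x = (if i = k then 1 else 0)"
    by (simp add: axis_def)
qed

lemma partial_half_norm_square:
  "partial j (\<lambda>x::real^'n::finite. (1/2) * (norm x)\<^sup>2) = (\<lambda>x. x $ j)"
proof
  fix x :: "real^'n"
  have "((\<lambda>x::real^'n. (1/2) * (x \<bullet> x)) has_derivative (\<lambda>h. (1/2) * (x \<bullet> h + h \<bullet> x))) (at x)"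
    by (auto intro!: derivative_eq_intros)
  from partial_eq_derivative[OF this]
  show "partial j (\<lambda>x::real^'n. (1/2) * (norm x)\<^sup>2) x = x $ j"
    by (simp add: power2_norm_eq_inner inner_axis inner_commute)
qed

lemma partial_periodic:
  assumes "\<And>x. f differentiable (at x)" and "\<And>x. f (x + k) = f x"
  shows "partial i f (x + k) = partial i f x"
proof -
  let ?D = "frechet_derivative f (at (x + k))"
  have D: "(f has_derivative ?D) (at (x + k))"
    using has_derivative_frechet_derivative[OF assms(1)] .
  have "((\<lambda>y. y + k) has_derivative (\<lambda>h. h)) (at x)"
    by (auto intro!: derivative_eq_intros)
  from has_derivative_compose[OF this D]
  have "(f has_derivative ?D) (at x)"
    using assms(2) by simp
  then have "partial i f x = ?D (axis i 1)"
    by (rule partial_eq_derivative)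
  moreover have "partial i f (x + k) = ?D (axis i 1)"
    by (rule partial_eq_derivative[OF D])
  ultimately show ?thesis
    by simp
qed

lemma iter_partial_append:
  "iter_partial (is @ js) f = iter_partial is (iter_partial js f)"
  by (induction "is") auto

definition smooth_upto :: "nat \<Rightarrow> (real^'n::finite \<Rightarrow> real) \<Rightarrow> bool" where
  "smooth_upto n f \<longleftrightarrow> (\<forall>(is::'n list) x. length is \<le> n \<longrightarrow> iter_partial is f differentiable (at x))"

lemma smooth_iff_smooth_upto: "smooth f \<longleftrightarrow> (\<forall>n. smooth_upto n f)"
  unfolding smooth_def smooth_upto_def by auto

lemma smooth_upto_0: "smooth_upto 0 f \<longleftrightarrow> (\<forall>x. f differentiable (at x))"
  unfolding smooth_upto_def by auto

lemma smooth_upto_Suc: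
  fixes f :: "real^'n::finite \<Rightarrow> real"
  shows "smooth_upto (Suc n) f \<longleftrightarrow> (\<forall>x. f differentiable (at x)) \<and> (\<forall>i::'n. smooth_upto n (partial i f))"
proof
  assume f: "smooth_upto (Suc n) f"
  have "f differentiable (at x)" for x
    using f[unfolded smooth_upto_def, rule_format, of "[]" x] by simp
  moreover have "smooth_upto n (partial i f)" for i
    unfolding smooth_upto_def
  proof (intro allI impI)
    fix "is" :: "'n list" and x
    assume "length is \<le> n"
    then show "iter_partial is (partial i f) differentiable (at x)"
      using f[unfolded smooth_upto_def, rule_format, of "is @ [i]" x] by (simp add: iter_partial_append)
  qed
  ultimately show "(\<forall>x. f differentiable (at x)) \<and> (\<forall>i::'n. smooth_upto n (partial i f))"
    by blast
next
  assume f: "(\<forall>x. f differentiable (at x)) \<and> (\<forall>i::'n. smooth_upto n (partial i f))"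
  show "smooth_upto (Suc n) f"
    unfolding smooth_upto_def
  proof (intro allI impI)
    fix "is" :: "'n list" and x
    assume len: "length is \<le> Suc n"
    show "iter_partial is f differentiable (at x)"
    proof (cases "is" rule: rev_cases)
      case Nil
      then show ?thesis
        using f by simp
    next
      case (snoc js j)
      then show ?thesis
        using f len unfolding smooth_upto_def by (simp add: iter_partial_append)
    qed
  qed
qed

lemma smooth_upto_Suc_imp: "smooth_upto (Suc n) f \<Longrightarrow> smooth_upto n f"
  unfolding smooth_upto_def by auto

lemma smooth_differentiable: "smooth f \<Longrightarrow> f differentiable (at x)"
  using smooth_iff_smooth_upto smooth_upto_0 by blast

lemma smooth_iff:
  fixes f :: "real^'n::finite \<Rightarrow> real"
  shows "smooth f \<longleftrightarrow> (\<forall>x. f differentiable (at x)) \<and> (\<forall>i::'n. smooth (partial i f))"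
proof
  assume "smooth f"
  then show "(\<forall>x. f differentiable (at x)) \<and> (\<forall>i::'n. smooth (partial i f))"
    using smooth_iff_smooth_upto smooth_upto_Suc smooth_upto_0 by blast
next
  assume "(\<forall>x. f differentiable (at x)) \<and> (\<forall>i::'n. smooth (partial i f))"
  then have "smooth_upto (Suc n) f" for n
    using smooth_iff_smooth_upto smooth_upto_Suc by blast
  then show "smooth f"
    using smooth_iff_smooth_upto smooth_upto_Suc_imp by blast
qed

lemma smooth_partial: "smooth f \<Longrightarrow> smooth (partial i f)"
  using smooth_iff by blast

lemma smooth_continuous_on: "smooth f \<Longrightarrow> continuous_on S f"
  by (intro continuous_at_imp_continuous_on ballI differentiable_imp_continuous_within
      smooth_differentiable)

lemma smooth_integrable_on: "smooth f \<Longrightarrow> f integrable_on cbox a b"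
  by (intro integrable_continuous smooth_continuous_on)

lemma smooth_upto_const: "smooth_upto n (\<lambda>x::real^'n::finite. c)"
  by (induction n arbitrary: c) (simp_all add: smooth_upto_0 smooth_upto_Suc partial_const)

lemma smooth_upto_add:
  "smooth_upto n f \<Longrightarrow> smooth_upto n g \<Longrightarrow> smooth_upto n (\<lambda>x. f x + g x)"
proof (induction n arbitrary: f g)
  case (Suc n)
  then show ?case
    by (simp add: smooth_upto_Suc partial_add)
qed (simp add: smooth_upto_0)

lemma smooth_upto_diff:
  "smooth_upto n f \<Longrightarrow> smooth_upto n g \<Longrightarrow> smooth_upto n (\<lambda>x. f x - g x)"
proof (induction n arbitrary: f g)
  case (Suc n)
  then show ?case
    by (simp add: smooth_upto_Suc partial_diff)
qed (simp add: smooth_upto_0)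

lemma smooth_upto_mult:
  "smooth_upto n f \<Longrightarrow> smooth_upto n g \<Longrightarrow> smooth_upto n (\<lambda>x. f x * g x)"
proof (induction n arbitrary: f g)
  case (Suc n)
  then have "smooth_upto n (partial i (\<lambda>x. f x * g x))" for i
    by (simp add: smooth_upto_Suc partial_mult smooth_upto_add smooth_upto_Suc_imp)
  with Suc.prems show ?case
    by (simp add: smooth_upto_Suc)
qed (simp add: smooth_upto_0)

lemma smooth_upto_inverse:
  assumes "smooth f" and "\<And>x. f x \<noteq> 0"
  shows "smooth_upto n (\<lambda>x. inverse (f x))"
proof (induction n)
  case 0
  then show ?case
    using assms by (simp add: smooth_upto_0 smooth_differentiable)
next
  case (Suc n)
  have "smooth_upto n (\<lambda>x. - partial i f x)" for i
    using smooth_upto_diff[OF smooth_upto_const, of n "partial i f" 0] smooth_partial[OF assms(1)]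
    by (simp add: smooth_iff_smooth_upto)
  then have "smooth_upto n (\<lambda>x. - partial i f x * (inverse (f x) * inverse (f x)))" for i
    using Suc.IH by (intro smooth_upto_mult)
  then show ?case
    using assms by (simp add: smooth_upto_Suc partial_inverse smooth_differentiable)
qed

lemma smooth_const: "smooth (\<lambda>x. c)"
  using smooth_upto_const smooth_iff_smooth_upto by blast

lemma smooth_add: "smooth f \<Longrightarrow> smooth g \<Longrightarrow> smooth (\<lambda>x. f x + g x)"
  using smooth_upto_add smooth_iff_smooth_upto by blast

lemma smooth_diff: "smooth f \<Longrightarrow> smooth g \<Longrightarrow> smooth (\<lambda>x. f x - g x)"
  using smooth_upto_diff smooth_iff_smooth_upto by blast

lemma smooth_mult: "smooth f \<Longrightarrow> smooth g \<Longrightarrow> smooth (\<lambda>x. f x * g x)"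
  using smooth_upto_mult smooth_iff_smooth_upto by blast

lemma smooth_divide:
  assumes "smooth f" and "smooth g" and "\<And>x. g x \<noteq> 0"
  shows "smooth (\<lambda>x. f x / g x)"
  using assms smooth_upto_inverse smooth_mult smooth_iff_smooth_upto
  unfolding divide_inverse by blast

lemma smooth_sum:
  "finite S \<Longrightarrow> (\<And>a. a \<in> S \<Longrightarrow> smooth (F a)) \<Longrightarrow> smooth (\<lambda>x. \<Sum>a\<in>S. F a x)"
  by (induction S rule: finite_induct) (auto intro: smooth_add smooth_const)

lemma smooth_prod:
  "finite S \<Longrightarrow> (\<And>a. a \<in> S \<Longrightarrow> smooth (F a)) \<Longrightarrow> smooth (\<lambda>x. \<Prod>a\<in>S. F a x)"
  by (induction S rule: finite_induct) (auto intro: smooth_mult smooth_const)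

lemma smooth_coord: "smooth (\<lambda>x::real^'n::finite. x $ k)"
proof -
  have "(\<lambda>x::real^'n. x $ k) differentiable (at x)" for x
    by (simp add: bounded_linear_imp_differentiable bounded_linear_vec_nth)
  then show ?thesis
    by (subst smooth_iff) (simp add: partial_coord smooth_const)
qed

lemma smooth_half_norm_square: "smooth (\<lambda>x::real^'n::finite. (1/2) * (norm x)\<^sup>2)"
proof -
  have "(\<lambda>x::real^'n. (1/2) * (norm x)\<^sup>2) = (\<lambda>x. (1/2) * (\<Sum>k\<in>UNIV. x $ k * x $ k))"
    by (simp add: power2_norm_eq_inner inner_vec_def)
  then show ?thesis
    by (simp only:) (intro smooth_mult smooth_const smooth_sum smooth_coord finite)
qed

lemma Zn_periodic_partial:
  assumes "smooth f" and "Zn_periodic f"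
  shows "Zn_periodic (partial i f)"
  using assms partial_periodic smooth_differentiable unfolding Zn_periodic_def by blast

section \<open>Second derivatives and Hessians\<close>

lemma mixed_difference_mean_value:
  assumes sm: "smooth f" and h: "h > 0"
  obtains p where "norm (p - x) \<le> 2 * h"
    and "f (x + h *\<^sub>R axis i 1 + h *\<^sub>R axis j 1) - f (x + h *\<^sub>R axis i 1) - f (x + h *\<^sub>R axis j 1) + f x
      = h * h * partial j (partial i f) p"
proof -
  define e where "e = axis i (1::real)"
  define d where "d = axis j (1::real)"
  have df: "\<And>x. f differentiable (at x)" and dfi: "\<And>x. partial i f differentiable (at x)"
    using sm smooth_differentiable smooth_partial by blast+
  define g where "g s = f (x + h *\<^sub>R d + s *\<^sub>R e) - f (x + s *\<^sub>R e)" for s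
  have dg: "DERIV g s :> partial i f (x + h *\<^sub>R d + s *\<^sub>R e) - partial i f (x + s *\<^sub>R e)" for s
    unfolding g_def e_def by (intro DERIV_diff has_real_derivative_along_axis df)
  obtain \<xi> where \<xi>: "0 < \<xi>" "\<xi> < h"
    "g h - g 0 = (h - 0) * (partial i f (x + h *\<^sub>R d + \<xi> *\<^sub>R e) - partial i f (x + \<xi> *\<^sub>R e))"
    using MVT2[OF h, of g "\<lambda>s. partial i f (x + h *\<^sub>R d + s *\<^sub>R e) - partial i f (x + s *\<^sub>R e)"] dg
    by blast
  define k where "k r = partial i f (x + \<xi> *\<^sub>R e + r *\<^sub>R d)" for r
  have dk: "DERIV k r :> partial j (partial i f) (x + \<xi> *\<^sub>R e + r *\<^sub>R d)" for r
    unfolding k_def d_def by (intro has_real_derivative_along_axis dfi)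
  obtain \<eta> where \<eta>: "0 < \<eta>" "\<eta> < h"
    "k h - k 0 = (h - 0) * partial j (partial i f) (x + \<xi> *\<^sub>R e + \<eta> *\<^sub>R d)"
    using MVT2[OF h, of k "\<lambda>r. partial j (partial i f) (x + \<xi> *\<^sub>R e + r *\<^sub>R d)"] dk by blast
  let ?p = "x + \<xi> *\<^sub>R e + \<eta> *\<^sub>R d"
  have "norm (?p - x) \<le> norm (\<xi> *\<^sub>R e) + norm (\<eta> *\<^sub>R d)"
    using norm_triangle_ineq[of "\<xi> *\<^sub>R e" "\<eta> *\<^sub>R d"] by (simp add: algebra_simps)
  also have "\<dots> = \<xi> + \<eta>"
    using \<xi> \<eta> by (simp add: e_def d_def)
  finally have "norm (?p - x) \<le> 2 * h"
    using \<xi> \<eta> by simp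
  moreover have "k h - k 0 = partial i f (x + h *\<^sub>R d + \<xi> *\<^sub>R e) - partial i f (x + \<xi> *\<^sub>R e)"
    unfolding k_def by (simp add: algebra_simps)
  then have "g h - g 0 = h * h * partial j (partial i f) ?p"
    using \<xi>(3) \<eta>(3) by simp
  moreover have "g h - g 0 = f (x + h *\<^sub>R e + h *\<^sub>R d) - f (x + h *\<^sub>R e) - f (x + h *\<^sub>R d) + f x"
    unfolding g_def by (simp add: algebra_simps)
  ultimately show ?thesis
    using that[of ?p] unfolding e_def d_def by simp
qed

text \<open>Schwarz's theorem: both mixed partials are limits of the same second difference quotient.\<close>
lemma partial_commute:
  assumes sm: "smooth f"
  shows "partial i (partial j f) x = partial j (partial i f) x"
proof (rule ccontr)
  define F1 where "F1 = partial j (partial i f)"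
  define F2 where "F2 = partial i (partial j f)"
  define \<epsilon> where "\<epsilon> = \<bar>F2 x - F1 x\<bar> / 2"
  assume "partial i (partial j f) x \<noteq> partial j (partial i f) x"
  then have ep: "\<epsilon> > 0"
    unfolding \<epsilon>_def F1_def F2_def by simp
  have c1: "continuous_on UNIV F1" and c2: "continuous_on UNIV F2"
    unfolding F1_def F2_def using sm smooth_partial smooth_continuous_on by blast+
  obtain d1 where d1: "d1 > 0" "\<And>y. dist y x < d1 \<Longrightarrow> dist (F1 y) (F1 x) < \<epsilon>"
    using c1 ep unfolding continuous_on_iff by blast
  obtain d2 where d2: "d2 > 0" "\<And>y. dist y x < d2 \<Longrightarrow> dist (F2 y) (F2 x) < \<epsilon>"
    using c2 ep unfolding continuous_on_iff by blast
  define h where "h = min d1 d2 / 3"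
  have h: "h > 0"
    using d1 d2 by (simp add: h_def)
  obtain p where p: "norm (p - x) \<le> 2 * h"
    "f (x + h *\<^sub>R axis i 1 + h *\<^sub>R axis j 1) - f (x + h *\<^sub>R axis i 1) - f (x + h *\<^sub>R axis j 1) + f x
      = h * h * F1 p"
    using mixed_difference_mean_value[OF sm h, of x i j] unfolding F1_def by blast
  obtain q where q: "norm (q - x) \<le> 2 * h"
    "f (x + h *\<^sub>R axis j 1 + h *\<^sub>R axis i 1) - f (x + h *\<^sub>R axis j 1) - f (x + h *\<^sub>R axis i 1) + f x
      = h * h * F2 q"
    using mixed_difference_mean_value[OF sm h, of x j i] unfolding F2_def by blast
  have "h * h * F1 p = h * h * F2 q"
    using p(2) q(2) by (simp add: algebra_simps)
  then have eq: "F1 p = F2 q"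
    using h by simp
  have "dist p x < d1"
    using p(1) h d1 d2 by (simp add: dist_norm h_def)
  then have a1: "\<bar>F1 p - F1 x\<bar> < \<epsilon>"
    using d1 by (simp add: dist_real_def)
  have "dist q x < d2"
    using q(1) h d1 d2 by (simp add: dist_norm h_def)
  then have a2: "\<bar>F2 q - F2 x\<bar> < \<epsilon>"
    using d2 by (simp add: dist_real_def)
  have "F2 x - F1 x = (F1 p - F1 x) - (F2 q - F2 x)"
    using eq by simp
  then have "\<bar>F2 x - F1 x\<bar> \<le> \<bar>F1 p - F1 x\<bar> + \<bar>F2 q - F2 x\<bar>"
    using abs_triangle_ineq4[of "F1 p - F1 x" "F2 q - F2 x"] by simp
  moreover have "\<bar>F1 p - F1 x\<bar> + \<bar>F2 q - F2 x\<bar> < 2 * \<epsilon>"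
    using a1 a2 by simp
  ultimately show False
    unfolding \<epsilon>_def by simp
qed

lemma hessian_add:
  assumes "smooth f" and "smooth g"
  shows "hessian (\<lambda>x. f x + g x) x = hessian f x + hessian g x"
  using assms by (simp add: hessian_def vec_eq_iff partial_add smooth_differentiable smooth_partial)

lemma hessian_diff:
  assumes "smooth f" and "smooth g"
  shows "hessian (\<lambda>x. f x - g x) x = hessian f x - hessian g x"
  using assms by (simp add: hessian_def vec_eq_iff partial_diff smooth_differentiable smooth_partial)

lemma hessian_half_norm_square: "hessian (\<lambda>x::real^'n::finite. (1/2) * (norm x)\<^sup>2) x = mat 1"
  unfolding hessian_def partial_half_norm_square partial_coord by (simp add: vec_eq_iff mat_def)

lemma hessian_half_norm_square_add:
  "smooth \<phi> \<Longrightarrow> hessian (\<lambda>x. (1/2) * (norm x)\<^sup>2 + \<phi> x) x = mat 1 + hessian \<phi> x"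
  by (simp only: hessian_add[OF smooth_half_norm_square] hessian_half_norm_square)

lemma hessian_symmetric: "smooth f \<Longrightarrow> transpose (hessian f x) = hessian f x"
  by (simp add: hessian_def transpose_def vec_eq_iff partial_commute)

lemma hessian_periodic:
  assumes "smooth f" and "Zn_periodic f" and "int_vec k"
  shows "hessian f (x + k) = hessian f x"
proof -
  have "Zn_periodic (partial a (partial b f))" for a b
    using assms(1,2) by (intro Zn_periodic_partial smooth_partial)
  then show ?thesis
    using assms(3) by (simp add: hessian_def vec_eq_iff Zn_periodic_def)
qed

definition smooth_matrix_field :: "(real^'n::finite \<Rightarrow> real^'k^'m) \<Rightarrow> bool" where
  "smooth_matrix_field M \<longleftrightarrow> (\<forall>a b. smooth (\<lambda>x. M x $ a $ b))"

lemma smooth_matrix_field_hessian: "smooth f \<Longrightarrow> smooth_matrix_field (hessian f)"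
  by (simp add: smooth_matrix_field_def hessian_def smooth_partial)

lemma smooth_matrix_field_diff:
  "smooth_matrix_field M \<Longrightarrow> smooth_matrix_field N \<Longrightarrow> smooth_matrix_field (\<lambda>x. M x - N x)"
  by (simp add: smooth_matrix_field_def smooth_diff)

lemma smooth_trace_mult:
  "smooth_matrix_field M \<Longrightarrow> smooth_matrix_field N \<Longrightarrow> smooth (\<lambda>x. trace (M x ** N x))"
  unfolding trace_def matrix_matrix_mult_def smooth_matrix_field_def
  by (simp add: smooth_sum smooth_mult)

lemma smooth_det: "smooth_matrix_field M \<Longrightarrow> smooth (\<lambda>x. det (M x))"
  unfolding det_def smooth_matrix_field_def
  by (intro smooth_sum smooth_mult smooth_const smooth_prod) (auto simp: finite_permutations)

lemma invertible_matrix_inv: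
  assumes "invertible M"
  shows "M ** matrix_inv M = mat 1" and "matrix_inv M ** M = mat 1"
  using someI_ex[OF assms[unfolded invertible_def]] unfolding matrix_inv_def by auto

lemma matrix_inv_entry_cramer:
  fixes M :: "real^'n::finite^'n"
  assumes "det M \<noteq> 0"
  shows "matrix_inv M $ k $ j = det (\<chi> a b. if b = k then (if a = j then 1 else 0) else M $ a $ b) / det M"
proof -
  have "M ** matrix_inv M = mat 1"
    using assms invertible_det_nz invertible_matrix_inv by blast
  then have "M *v (matrix_inv M *v axis j 1) = axis j 1"
    by (simp add: matrix_vector_mul_assoc)
  then have "(matrix_inv M *v axis j 1) $ k = det (\<chi> a b. if b = k then axis j 1 $ a else M $ a $ b) / det M"
    using cramer[OF assms] by simp
  moreover have "(matrix_inv M *v axis j 1) $ k = matrix_inv M $ k $ j"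
    by (simp add: matrix_vector_mult_def axis_def if_distrib sum.delta' cong: if_cong)
  moreover have "(\<chi> a b. if b = k then axis j 1 $ a else M $ a $ b)
      = (\<chi> a b. if b = k then (if a = j then 1 else 0) else M $ a $ b)"
    by (simp add: axis_def vec_eq_iff)
  ultimately show ?thesis
    by simp
qed

lemma smooth_matrix_field_matrix_inv:
  fixes M :: "real^'n::finite \<Rightarrow> real^'m::finite^'m"
  assumes sM: "smooth_matrix_field M" and dM: "\<And>x. det (M x) \<noteq> 0"
  shows "smooth_matrix_field (\<lambda>x. matrix_inv (M x))"
  unfolding smooth_matrix_field_def
proof (intro allI)
  fix k j
  define N where "N x = (\<chi> a b. if b = k then (if a = j then 1 else 0) else M x $ a $ b)" for x
  have "smooth (\<lambda>x. N x $ a $ b)" for a b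
    using sM by (cases "b = k") (simp_all add: N_def smooth_matrix_field_def smooth_const)
  then have "smooth_matrix_field N"
    by (simp add: smooth_matrix_field_def)
  then have "smooth (\<lambda>x. det (N x) / det (M x))"
    using sM dM by (intro smooth_divide smooth_det)
  moreover have "matrix_inv (M x) $ k $ j = det (N x) / det (M x)" for x
    unfolding N_def by (rule matrix_inv_entry_cramer[OF dM])
  ultimately show "smooth (\<lambda>x. matrix_inv (M x) $ k $ j)"
    by simp
qed

definition double_divergence :: "(real^'n::finite \<Rightarrow> real^'n^'n) \<Rightarrow> real^'n \<Rightarrow> real" where
  "double_divergence P x = (\<Sum>a\<in>UNIV. \<Sum>b\<in>UNIV. partial a (partial b (\<lambda>y. P y $ a $ b)) x)"

lemma abreu_op_eq_double_divergence:
  "abreu_op u = double_divergence (\<lambda>y. matrix_inv (hessian u y))"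
  by (simp add: abreu_op_def double_divergence_def fun_eq_iff)

lemma double_divergence_diff:
  assumes "smooth_matrix_field P" and "smooth_matrix_field Q"
  shows "double_divergence (\<lambda>x. P x - Q x) x = double_divergence P x - double_divergence Q x"
  using assms
  by (simp add: double_divergence_def smooth_matrix_field_def partial_diff smooth_differentiable
      smooth_partial sum_subtractf)

section \<open>Positive definite matrices\<close>

definition quadratic_form :: "real^'n^'n \<Rightarrow> real^'n \<Rightarrow> real" where
  "quadratic_form A x = (\<Sum>a\<in>UNIV. \<Sum>b\<in>UNIV. x $ a * A $ a $ b * x $ b)"

lemma if_zero_distribs:
  "(if P then s else 0) * y = (if P then s * y else (0::real))"
  "y * (if P then s else 0) = (if P then y * s else (0::real))"
  "(\<Sum>b\<in>S. if P then f b else (0::real)) = (if P then (\<Sum>b\<in>S. f b) else 0)"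
  by simp_all

lemma inner_matrix_vector_mult_self: "x \<bullet> (A *v x) = quadratic_form A x"
  by (simp add: quadratic_form_def inner_vec_def matrix_vector_mult_def sum_distrib_left mult.assoc)

lemma quadratic_form_axis: "quadratic_form A (axis k 1) = A $ k $ k"
  by (simp add: quadratic_form_def axis_def if_zero_distribs sum.delta)

lemma quadratic_form_nonneg: "pos_def M \<Longrightarrow> quadratic_form M x \<ge> 0"
  unfolding pos_def_def inner_matrix_vector_mult_self[symmetric]
  by (cases "x = 0") (auto intro: less_imp_le)

lemma quadratic_form_eq_0_imp_eq_0: "pos_def M \<Longrightarrow> quadratic_form M x = 0 \<Longrightarrow> x = 0"
  unfolding pos_def_def inner_matrix_vector_mult_self[symmetric] by force

lemma quadratic_form_shift_axis:
  assumes sym: "\<And>a b. A $ a $ b = A $ b $ a"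
  shows "quadratic_form A (x - s *\<^sub>R axis k 1)
    = quadratic_form A x - 2 * s * (\<Sum>b\<in>UNIV. A $ k $ b * x $ b) + s * s * A $ k $ k"
proof -
  have e: "(x - s *\<^sub>R axis k 1) $ a = x $ a - (if a = k then s else 0)" for a
    by (simp add: axis_def)
  have "quadratic_form A (x - s *\<^sub>R axis k 1) = (\<Sum>a\<in>UNIV. \<Sum>b\<in>UNIV.
      (x $ a - (if a = k then s else 0)) * A $ a $ b * (x $ b - (if b = k then s else 0)))"
    unfolding quadratic_form_def e ..
  also have "\<dots> = (\<Sum>a\<in>UNIV. \<Sum>b\<in>UNIV. x $ a * A $ a $ b * x $ b)
      - (\<Sum>a\<in>UNIV. \<Sum>b\<in>UNIV. (if b = k then s else 0) * x $ a * A $ a $ b)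
      - (\<Sum>a\<in>UNIV. \<Sum>b\<in>UNIV. (if a = k then s else 0) * A $ a $ b * x $ b)
      + (\<Sum>a\<in>UNIV. \<Sum>b\<in>UNIV. (if a = k then s else 0) * A $ a $ b * (if b = k then s else 0))"
    by (simp add: algebra_simps sum_subtractf sum.distrib)
  also have "\<dots> = quadratic_form A x - s * (\<Sum>a\<in>UNIV. x $ a * A $ a $ k)
      - s * (\<Sum>b\<in>UNIV. A $ k $ b * x $ b) + s * s * A $ k $ k"
    by (simp add: quadratic_form_def if_zero_distribs sum.delta sum_distrib_left mult.assoc)
  also have "(\<Sum>a\<in>UNIV. x $ a * A $ a $ k) = (\<Sum>b\<in>UNIV. A $ k $ b * x $ b)"
    using sym by (simp add: mult.commute)
  finally show ?thesis
    by simp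
qed

text \<open>Completing the square in the k-th variable: the Schur complement of the pivot \<open>A$k$k\<close>
  evaluates the quadratic form at a vector whose k-th coordinate has been shifted.\<close>
lemma quadratic_form_schur_complement:
  assumes sym: "\<And>a b. A $ a $ b = A $ b $ a" and pivot: "A $ k $ k \<noteq> 0"
  shows "quadratic_form (\<chi> a b. A $ a $ b - A $ a $ k * A $ k $ b / A $ k $ k) x
    = quadratic_form A (x - ((\<Sum>b\<in>UNIV. A $ k $ b * x $ b) / A $ k $ k) *\<^sub>R axis k 1)"
proof -
  define \<alpha> where "\<alpha> = A $ k $ k"
  define \<beta> where "\<beta> = (\<Sum>b\<in>UNIV. A $ k $ b * x $ b)"
  have "quadratic_form (\<chi> a b. A $ a $ b - A $ a $ k * A $ k $ b / \<alpha>) x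
      = quadratic_form A x - (\<Sum>a\<in>UNIV. \<Sum>b\<in>UNIV. (x $ a * A $ a $ k) * (A $ k $ b * x $ b) / \<alpha>)"
    unfolding quadratic_form_def by (simp add: algebra_simps sum_subtractf)
  also have "(\<Sum>a\<in>UNIV. \<Sum>b\<in>UNIV. (x $ a * A $ a $ k) * (A $ k $ b * x $ b) / \<alpha>)
      = (\<Sum>a\<in>UNIV. x $ a * A $ a $ k) * \<beta> / \<alpha>"
    unfolding \<beta>_def by (simp add: sum_product sum_divide_distrib)
  also have "(\<Sum>a\<in>UNIV. x $ a * A $ a $ k) = \<beta>"
    unfolding \<beta>_def using sym by (simp add: mult.commute)
  also have "quadratic_form A x - \<beta> * \<beta> / \<alpha>
      = quadratic_form A x - 2 * (\<beta> / \<alpha>) * \<beta> + (\<beta> / \<alpha>) * (\<beta> / \<alpha>) * \<alpha>"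
    using pivot unfolding \<alpha>_def by (simp add: field_simps)
  also have "\<dots> = quadratic_form A (x - (\<beta> / \<alpha>) *\<^sub>R axis k 1)"
    using quadratic_form_shift_axis[OF sym] unfolding \<alpha>_def \<beta>_def by simp
  finally show ?thesis
    unfolding \<alpha>_def \<beta>_def .
qed

lemma cholesky_decomposition_on:
  fixes A :: "real^'n::finite^'n"
  assumes "finite S"
    and "\<forall>a b. A $ a $ b = A $ b $ a"
    and "\<forall>a b. a \<notin> S \<or> b \<notin> S \<longrightarrow> A $ a $ b = 0"
    and "\<forall>x. x \<noteq> 0 \<and> (\<forall>a. a \<notin> S \<longrightarrow> x $ a = 0) \<longrightarrow> quadratic_form A x > 0"
  shows "\<exists>c::'n \<Rightarrow> real^'n. \<forall>a b. A $ a $ b = (\<Sum>m\<in>S. c m $ a * c m $ b)"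
  using assms
proof (induction S arbitrary: A rule: finite_induct)
  case (insert k S A)
  note sym = insert.prems(1) and supp = insert.prems(2) and pd = insert.prems(3)
  define \<alpha> where "\<alpha> = A $ k $ k"
  have "quadratic_form A (axis k 1) > 0"
    using pd by (auto simp: axis_def vec_eq_iff)
  then have \<alpha>: "\<alpha> > 0"
    unfolding \<alpha>_def quadratic_form_axis .
  define A' :: "real^'n^'n" where "A' = (\<chi> a b. A $ a $ b - A $ a $ k * A $ k $ b / \<alpha>)"
  have A': "A' $ a $ b = A $ a $ b - A $ a $ k * A $ k $ b / \<alpha>" for a b
    unfolding A'_def by simp
  have "\<forall>a b. A' $ a $ b = A' $ b $ a"
    using sym unfolding A' by (simp add: mult.commute)
  moreover have "A' $ a $ b = 0" if ab: "a \<notin> S \<or> b \<notin> S" for a b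
  proof (cases "a = k \<or> b = k")
    case True
    then show ?thesis
      using \<alpha> sym unfolding A' \<alpha>_def by auto
  next
    case False
    then have "a \<notin> insert k S \<or> b \<notin> insert k S"
      using ab by auto
    then show ?thesis
      using supp unfolding A' by auto
  qed
  moreover have "quadratic_form A' x > 0" if x: "x \<noteq> 0" "\<forall>a. a \<notin> S \<longrightarrow> x $ a = 0" for x
  proof -
    define \<eta> where "\<eta> = x - ((\<Sum>b\<in>UNIV. A $ k $ b * x $ b) / \<alpha>) *\<^sub>R axis k 1"
    obtain j where j: "x $ j \<noteq> 0"
      using x by (auto simp: vec_eq_iff)
    then have "j \<noteq> k"
      using x insert.hyps by auto
    then have "\<eta> \<noteq> 0"
      using j by (auto simp: \<eta>_def axis_def vec_eq_iff)
    moreover have "\<forall>a. a \<notin> insert k S \<longrightarrow> \<eta> $ a = 0"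
      using x by (simp add: \<eta>_def axis_def)
    ultimately have "quadratic_form A \<eta> > 0"
      using pd by blast
    moreover have "quadratic_form A' x = quadratic_form A \<eta>"
      unfolding A'_def \<eta>_def \<alpha>_def
      by (rule quadratic_form_schur_complement) (use sym \<alpha> \<alpha>_def in auto)
    ultimately show ?thesis
      by simp
  qed
  ultimately obtain c' where c': "\<forall>a b. A' $ a $ b = (\<Sum>m\<in>S. c' m $ a * c' m $ b)"
    using insert.IH by blast
  define c where "c m = (if m = k then (1 / sqrt \<alpha>) *\<^sub>R (\<chi> a. A $ a $ k) else c' m)" for m
  have "A $ a $ b = (\<Sum>m\<in>insert k S. c m $ a * c m $ b)" for a b
  proof -
    have "(\<Sum>m\<in>insert k S. c m $ a * c m $ b) = c k $ a * c k $ b + (\<Sum>m\<in>S. c' m $ a * c' m $ b)"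
      using insert.hyps by (simp add: c_def) (rule sum.cong, auto)
    also have "c k $ a * c k $ b = A $ a $ k * A $ k $ b / \<alpha>"
      using \<alpha> sym by (simp add: c_def real_sqrt_mult[symmetric] field_simps)
    finally show ?thesis
      using c'[rule_format, of a b] A'[of a b] by simp
  qed
  then show ?case
    by blast
qed simp

lemma cholesky_decomposition:
  fixes A :: "real^'n::finite^'n"
  assumes "transpose A = A" and "pos_def A"
  obtains C :: "real^'n^'n" where "A = transpose C ** C"
proof -
  have "\<forall>a b. A $ a $ b = A $ b $ a"
    using assms(1) by (simp add: transpose_def vec_eq_iff)
  moreover have "\<forall>x. x \<noteq> 0 \<longrightarrow> quadratic_form A x > 0"
    using assms(2) by (simp add: pos_def_def inner_matrix_vector_mult_self)
  ultimately obtain c :: "'n \<Rightarrow> real^'n" where c: "\<forall>a b. A $ a $ b = (\<Sum>m\<in>UNIV. c m $ a * c m $ b)"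
    using cholesky_decomposition_on[of UNIV A] by auto
  define C :: "real^'n^'n" where "C = (\<chi> m a. c m $ a)"
  have "A = transpose C ** C"
    by (simp add: vec_eq_iff c C_def matrix_matrix_mult_def transpose_def)
  then show ?thesis
    using that by blast
qed

lemma pos_def_invertible:
  fixes U :: "real^'n::finite^'n"
  assumes "pos_def U"
  shows "invertible U"
proof -
  have "\<forall>x. U *v x = 0 \<longrightarrow> x = 0"
    using assms unfolding pos_def_def by force
  then obtain B where "B ** U = mat 1"
    using matrix_left_invertible_ker by blast
  moreover from this have "U ** B = mat 1"
    using matrix_left_right_inverse by blast
  ultimately show ?thesis
    unfolding invertible_def by blast
qed

lemma pos_def_matrix_inv:
  fixes U :: "real^'n::finite^'n"
  assumes "pos_def U"
  shows "pos_def (matrix_inv U)"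
  unfolding pos_def_def
proof (intro allI impI)
  fix x :: "real^'n"
  assume x: "x \<noteq> 0"
  let ?y = "matrix_inv U *v x"
  have Uy: "U *v ?y = x"
    using invertible_matrix_inv(1)[OF pos_def_invertible[OF assms]]
    by (simp add: matrix_vector_mul_assoc)
  then have "?y \<noteq> 0"
    using x by auto
  then have "?y \<bullet> (U *v ?y) > 0"
    using assms unfolding pos_def_def by blast
  then show "x \<bullet> (matrix_inv U *v x) > 0"
    using Uy by (simp add: inner_commute)
qed

lemma transpose_matrix_inv_symmetric:
  fixes U :: "real^'n::finite^'n"
  assumes "invertible U" and "transpose U = U"
  shows "transpose (matrix_inv U) = matrix_inv U"
proof -
  let ?P = "matrix_inv U"
  have "transpose ?P ** U = transpose (U ** ?P)"
    using assms(2) by (simp add: matrix_transpose_mul)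
  then have "transpose ?P ** U = mat 1"
    using invertible_matrix_inv(1)[OF assms(1)] by (simp add: transpose_mat)
  then have "transpose ?P = transpose ?P ** (U ** ?P)"
    using invertible_matrix_inv(1)[OF assms(1)] by simp
  also have "\<dots> = ?P"
    by (simp add: matrix_mul_assoc \<open>transpose ?P ** U = mat 1\<close>)
  finally show ?thesis .
qed

lemma trace_mult_self_transpose: "trace (Z ** B ** transpose Z) = (\<Sum>m\<in>UNIV. quadratic_form B (Z $ m))"
proof -
  have "(Z ** B ** transpose Z) $ m $ m = quadratic_form B (Z $ m)" for m
    unfolding quadratic_form_def matrix_matrix_mult_def transpose_def
    by (simp add: sum_distrib_left sum_distrib_right mult.assoc mult.left_commute) (rule sum.swap)
  then show ?thesis
    by (simp add: trace_def)
qed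

lemma matrix_mult_diff_distribs:
  fixes A B C :: "real^'n::finite^'n"
  shows "A ** (B - C) = A ** B - A ** C" and "(B - C) ** A = B ** A - C ** A"
  by (simp_all add: matrix_matrix_mult_def vec_eq_iff algebra_simps sum_subtractf)

text \<open>Monotonicity of matrix inversion: with \<open>W = U - V\<close> one has
  \<open>U\<inverse> - V\<inverse> = - U\<inverse> W V\<inverse>\<close>, and writing \<open>U\<inverse> = C\<^sup>T C\<close> turns \<open>tr(U\<inverse> W V\<inverse> W)\<close> into a sum of
  values of the positive definite form \<open>V\<inverse>\<close> at the rows of \<open>Z = C W\<close>.\<close>
lemma trace_matrix_inv_diff:
  fixes U V :: "real^'n::finite^'n"
  assumes pU: "pos_def U" and pV: "pos_def V" and sU: "transpose U = U" and sV: "transpose V = V"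
  obtains Z :: "real^'n^'n" where "trace ((matrix_inv U - matrix_inv V) ** (U - V))
      = - (\<Sum>m\<in>UNIV. quadratic_form (matrix_inv V) (Z $ m))"
    and "Z = 0 \<Longrightarrow> U = V"
proof -
  define P where "P = matrix_inv U"
  define Q where "Q = matrix_inv V"
  define W where "W = U - V"
  have UP: "U ** P = mat 1" "P ** U = mat 1"
    using invertible_matrix_inv pos_def_invertible[OF pU] unfolding P_def by auto
  have VQ: "V ** Q = mat 1"
    using invertible_matrix_inv pos_def_invertible[OF pV] unfolding Q_def by auto
  have "transpose W = W"
    unfolding W_def using sU sV by (simp add: transpose_def vec_eq_iff)
  have "P ** W ** Q = P ** (U ** Q) - P ** (V ** Q)"
    unfolding W_def by (simp add: matrix_mult_diff_distribs matrix_mul_assoc)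
  also have "\<dots> = Q - P"
    using UP VQ by (simp add: matrix_mul_assoc)
  finally have "Q - P = P ** W ** Q" ..
  moreover have "trace ((P - Q) ** W) = - trace ((Q - P) ** W)"
    by (simp add: matrix_mult_diff_distribs trace_sub)
  ultimately have "trace ((P - Q) ** W) = - trace (P ** W ** Q ** W)"
    by simp
  have "transpose P = P"
    unfolding P_def by (rule transpose_matrix_inv_symmetric[OF pos_def_invertible[OF pU] sU])
  then obtain C :: "real^'n^'n" where C: "P = transpose C ** C"
    using cholesky_decomposition pos_def_matrix_inv[OF pU] unfolding P_def by blast
  define Z where "Z = C ** W"
  have "trace (P ** W ** Q ** W) = trace (transpose C ** (C ** W ** Q ** W))"
    unfolding C by (simp add: matrix_mul_assoc)
  also have "\<dots> = trace (C ** W ** Q ** W ** transpose C)"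
    by (rule trace_mul_sym)
  also have "\<dots> = trace (Z ** Q ** transpose Z)"
    unfolding Z_def using \<open>transpose W = W\<close> by (simp add: matrix_transpose_mul matrix_mul_assoc)
  also have "\<dots> = (\<Sum>m\<in>UNIV. quadratic_form Q (Z $ m))"
    by (rule trace_mult_self_transpose)
  finally have "trace ((P - Q) ** W) = - (\<Sum>m\<in>UNIV. quadratic_form Q (Z $ m))"
    using \<open>trace ((P - Q) ** W) = - trace (P ** W ** Q ** W)\<close> by simp
  moreover have "U = V" if "Z = 0"
  proof -
    have "W = U ** P ** W"
      using UP by simp
    also have "\<dots> = U ** (transpose C ** Z)"
      unfolding C Z_def by (simp add: matrix_mul_assoc)
    finally have "W = U ** (transpose C ** Z)" .
    then show ?thesis
      using that unfolding W_def by (simp add: matrix_matrix_mult_def vec_eq_iff)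
  qed
  ultimately show ?thesis
    using that unfolding P_def Q_def W_def by blast
qed

lemma trace_matrix_inv_diff_nonpos:
  fixes U V :: "real^'n::finite^'n"
  assumes "pos_def U" and "pos_def V" and "transpose U = U" and "transpose V = V"
  shows "trace ((matrix_inv U - matrix_inv V) ** (U - V)) \<le> 0"
proof -
  obtain Z :: "real^'n^'n" where "trace ((matrix_inv U - matrix_inv V) ** (U - V))
      = - (\<Sum>m\<in>UNIV. quadratic_form (matrix_inv V) (Z $ m))"
    by (rule trace_matrix_inv_diff[OF assms])
  then show ?thesis
    using quadratic_form_nonneg[OF pos_def_matrix_inv[OF assms(2)]] by (simp add: sum_nonneg)
qed

lemma trace_matrix_inv_diff_eq_0_imp_eq:
  fixes U V :: "real^'n::finite^'n"
  assumes "pos_def U" and "pos_def V" and "transpose U = U" and "transpose V = V"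
    and "trace ((matrix_inv U - matrix_inv V) ** (U - V)) = 0"
  shows "U = V"
proof -
  obtain Z :: "real^'n^'n" where Z: "trace ((matrix_inv U - matrix_inv V) ** (U - V))
      = - (\<Sum>m\<in>UNIV. quadratic_form (matrix_inv V) (Z $ m))" and "Z = 0 \<Longrightarrow> U = V"
    by (rule trace_matrix_inv_diff[OF assms(1-4)]) blast
  have pV': "pos_def (matrix_inv V)"
    using pos_def_matrix_inv[OF assms(2)] .
  have "\<forall>m\<in>UNIV. quadratic_form (matrix_inv V) (Z $ m) = 0"
    using assms(5) Z sum_nonneg_eq_0_iff[of UNIV "\<lambda>m. quadratic_form (matrix_inv V) (Z $ m)"]
      quadratic_form_nonneg[OF pV'] by simp
  then have "Z = 0"
    using quadratic_form_eq_0_imp_eq_0[OF pV'] by (simp add: vec_eq_iff)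
  then show ?thesis
    using \<open>Z = 0 \<Longrightarrow> U = V\<close> by blast
qed

section \<open>Integration over the unit cube\<close>

lemma unit_cube_axis_splits:
  fixes e :: "real^'n::finite" and t :: real
  assumes t: "0 \<le> t" "t \<le> 1"
    and ie: "\<And>x. x \<bullet> e = x $ i" and ec: "\<And>k. e $ k = (if k = i then 1 else 0)"
  shows "cbox (t *\<^sub>R e) (1 + t *\<^sub>R e) \<inter> {x. 1 \<le> x \<bullet> e} = cbox e (1 + t *\<^sub>R e)"
    and "cbox (t *\<^sub>R e) (1 + t *\<^sub>R e) \<inter> {x. x \<bullet> e \<le> 1} = cbox (t *\<^sub>R e) 1"
    and "cbox 0 1 \<inter> {x. x \<bullet> e \<le> t} = cbox 0 (1 + (t - 1) *\<^sub>R e)"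
    and "cbox 0 1 \<inter> {x. t \<le> x \<bullet> e} = cbox (t *\<^sub>R e) 1"
proof -
  have S1: "cbox a b \<inter> {x. x \<bullet> e \<le> c} = cbox a (\<chi> k. if k = i then min (b $ i) c else b $ k)"
    for a b :: "real^'n" and c
    using interval_split_cart(1)[where a=a and b=b and k=i and c=c] by (simp add: ie interval_cbox_cart)
  have S2: "cbox a b \<inter> {x. c \<le> x \<bullet> e} = cbox (\<chi> k. if k = i then max (a $ i) c else a $ k) b"
    for a b :: "real^'n" and c
    using interval_split_cart(2)[where a=a and b=b and k=i and c=c] by (simp add: ie interval_cbox_cart)
  show "cbox (t *\<^sub>R e) (1 + t *\<^sub>R e) \<inter> {x. 1 \<le> x \<bullet> e} = cbox e (1 + t *\<^sub>R e)"
    unfolding S2 using t by (intro arg_cong2[where f=cbox]) (auto simp: vec_eq_iff ec)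
  show "cbox (t *\<^sub>R e) (1 + t *\<^sub>R e) \<inter> {x. x \<bullet> e \<le> 1} = cbox (t *\<^sub>R e) 1"
    unfolding S1 using t by (intro arg_cong2[where f=cbox]) (auto simp: vec_eq_iff ec)
  show "cbox 0 1 \<inter> {x. x \<bullet> e \<le> t} = cbox 0 (1 + (t - 1) *\<^sub>R e)"
    unfolding S1 using t by (intro arg_cong2[where f=cbox]) (auto simp: vec_eq_iff ec)
  show "cbox 0 1 \<inter> {x. t \<le> x \<bullet> e} = cbox (t *\<^sub>R e) 1"
    unfolding S2 using t by (intro arg_cong2[where f=cbox]) (auto simp: vec_eq_iff ec)
qed

text \<open>Cut the shifted cube along the hyperplane \<open>x$i = 1\<close> and translate the upper piece back
  by \<open>-axis i 1\<close>: it fills exactly the part of the unit cube that the shift left uncovered.\<close>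
lemma integral_unit_cube_shift_periodic:
  fixes g :: "real^'n::finite \<Rightarrow> real"
  assumes cont: "continuous_on UNIV g" and per: "\<And>x. g (x + axis i 1) = g x"
    and t: "0 \<le> t" "t \<le> 1"
  shows "integral (cbox 0 1) (\<lambda>x. g (x + t *\<^sub>R axis i 1)) = integral (cbox 0 1) g"
proof -
  define e :: "real^'n" where "e = axis i 1"
  define q :: "real^'n" where "q = 1 + (t - 1) *\<^sub>R e"
  have eB: "e \<in> Basis"
    unfolding e_def by simp
  have ie: "x \<bullet> e = x $ i" for x :: "real^'n"
    unfolding e_def by (simp add: inner_axis)
  have ec: "e $ k = (if k = i then 1 else 0)" for k
    unfolding e_def by (simp add: axis_def)
  have int: "g integrable_on cbox a b" for a b
    by (rule integrable_continuous) (rule continuous_on_subset[OF cont], simp)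
  have "((g \<circ> (+) (t *\<^sub>R e)) has_integral integral (cbox (0 + t *\<^sub>R e) (1 + t *\<^sub>R e)) g) (cbox 0 1)"
    using has_integral_shift_cbox_iff[of g "t *\<^sub>R e" _ 0 1] int[THEN integrable_integral] by simp
  then have shift: "integral (cbox 0 1) (\<lambda>x. g (x + t *\<^sub>R e)) = integral (cbox (t *\<^sub>R e) (1 + t *\<^sub>R e)) g"
    by (simp add: o_def add.commute integral_unique)
  note splits = unit_cube_axis_splits[OF t ie ec]
  have upper: "integral (cbox (t *\<^sub>R e) (1 + t *\<^sub>R e)) g
      = integral (cbox (t *\<^sub>R e) 1) g + integral (cbox e (1 + t *\<^sub>R e)) g"
    using integral_split[OF int eB, of "t *\<^sub>R e" "1 + t *\<^sub>R e" 1] splits(1,2) by simp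
  have lower: "integral (cbox 0 1) g = integral (cbox 0 q) g + integral (cbox (t *\<^sub>R e) 1) g"
    using integral_split[OF int eB, of 0 1 t] splits(3,4) unfolding q_def by simp
  have "((g \<circ> (+) e) has_integral integral (cbox (0 + e) (q + e)) g) (cbox 0 q)"
    using has_integral_shift_cbox_iff[of g e _ 0 q] int[THEN integrable_integral] by simp
  moreover have "g \<circ> (+) e = g"
    using per unfolding e_def by (auto simp: o_def add.commute)
  moreover have "q + e = 1 + t *\<^sub>R e"
    unfolding q_def by (simp add: algebra_simps)
  ultimately have "integral (cbox e (1 + t *\<^sub>R e)) g = integral (cbox 0 q) g"
    by (simp add: integral_unique)
  then show ?thesis
    using shift upper lower unfolding e_def by simp
qed

text \<open>The integral of \<open>F(x + t e\<^sub>i)\<close> over the cube does not depend on \<open>t\<close>; differentiating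
  under the integral sign at \<open>t = 0\<close> gives the claim.\<close>
lemma integral_partial_periodic_eq_0:
  fixes F :: "real^'n::finite \<Rightarrow> real"
  assumes sm: "smooth F" and per: "\<And>x. F (x + axis i 1) = F x"
  shows "integral (cbox 0 1) (partial i F) = 0"
proof -
  define e :: "real^'n" where "e = axis i 1"
  define I where "I t = integral (cbox 0 1) (\<lambda>x. F (x + t *\<^sub>R e))" for t
  have cF: "continuous_on UNIV F" and cP: "continuous_on UNIV (partial i F)"
    using sm smooth_continuous_on smooth_partial by blast+
  have I_const: "I t = I 0" if "t \<in> {-1<..<1}" for t
  proof (cases "t \<ge> 0")
    case True
    then show ?thesis
      using integral_unit_cube_shift_periodic[OF cF per, of t] that unfolding I_def e_def by simp
  next
    case False
    have "F (x + t *\<^sub>R e) = F (x + (t + 1) *\<^sub>R e)" for x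
      using per[of "x + t *\<^sub>R e"] unfolding e_def by (simp add: algebra_simps)
    then have "I t = I (t + 1)"
      unfolding I_def by simp
    also have "\<dots> = I 0"
      using integral_unit_cube_shift_periodic[OF cF per, of "t + 1"] that False
      unfolding I_def e_def by simp
    finally show ?thesis .
  qed
  have "(I has_field_derivative integral (cbox 0 1) (\<lambda>x. partial i F (x + 0 *\<^sub>R e))) (at 0 within UNIV)"
    unfolding I_def[abs_def]
  proof (rule leibniz_rule_field_derivative[where fx = "\<lambda>t x. partial i F (x + t *\<^sub>R e)"])
    show "((\<lambda>t. F (x + t *\<^sub>R e)) has_field_derivative partial i F (x + t *\<^sub>R e)) (at t within UNIV)"
      for x t
      unfolding e_def using sm smooth_differentiable by (intro has_real_derivative_along_axis)
    show "(\<lambda>x. F (x + t *\<^sub>R e)) integrable_on cbox 0 1" for t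
      by (rule integrable_continuous, rule continuous_on_compose2[OF cF]) (auto intro!: continuous_intros)
    have "continuous_on (UNIV \<times> cbox 0 1) (\<lambda>p::real \<times> (real^'n). snd p + fst p *\<^sub>R e)"
      by (intro continuous_intros)
    then have "continuous_on (UNIV \<times> cbox 0 1) (partial i F \<circ> (\<lambda>p::real \<times> (real^'n). snd p + fst p *\<^sub>R e))"
      by (rule continuous_on_compose) (rule continuous_on_subset[OF cP], simp)
    then show "continuous_on (UNIV \<times> cbox 0 1) (\<lambda>(t, x). partial i F (x + t *\<^sub>R e))"
      by (simp add: o_def split_beta)
  qed auto
  then have "DERIV I 0 :> integral (cbox 0 1) (partial i F)"
    by simp
  moreover have "DERIV (\<lambda>_. I 0) 0 :> integral (cbox 0 1) (partial i F)"
    by (rule has_field_derivative_transform_within_open[OF calculation, of "{-1<..<1}"])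
      (simp, simp, erule I_const)
  ultimately show ?thesis
    using DERIV_const DERIV_unique by blast
qed

lemma int_vec_axis: "int_vec (axis i 1 :: real^'n::finite)"
  unfolding int_vec_def by (simp add: axis_def)

lemma integral_by_parts_periodic:
  fixes f g :: "real^'n::finite \<Rightarrow> real"
  assumes sf: "smooth f" and sg: "smooth g" and pf: "Zn_periodic f" and pg: "Zn_periodic g"
  shows "integral (cbox 0 1) (\<lambda>x. partial i f x * g x) = - integral (cbox 0 1) (\<lambda>x. f x * partial i g x)"
proof -
  have "(\<lambda>x. f x * g x) (x + axis i 1) = (\<lambda>x. f x * g x) x" for x
    using pf pg int_vec_axis[of i] unfolding Zn_periodic_def by simp
  then have "0 = integral (cbox 0 1) (partial i (\<lambda>x. f x * g x))"
    using integral_partial_periodic_eq_0[OF smooth_mult[OF sf sg]] by simp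
  also have "\<dots> = integral (cbox 0 1) (\<lambda>x. partial i f x * g x) + integral (cbox 0 1) (\<lambda>x. f x * partial i g x)"
    using sf sg
    by (simp add: partial_mult smooth_differentiable integral_add smooth_integrable_on smooth_mult
        smooth_partial)
  finally show ?thesis
    by simp
qed

lemma Zn_periodic_eq_0_if_eq_0_on_unit_cube:
  fixes f :: "real^'n::finite \<Rightarrow> real"
  assumes "Zn_periodic f" and "\<And>x. x \<in> cbox 0 1 \<Longrightarrow> f x = 0"
  shows "f y = 0"
proof -
  define k :: "real^'n" where "k = (\<chi> i. of_int \<lfloor>y $ i\<rfloor>)"
  have "int_vec k"
    unfolding int_vec_def k_def by simp
  moreover have "y $ i - of_int \<lfloor>y $ i\<rfloor> \<le> 1" for i
    using real_of_int_floor_add_one_gt[of "y $ i"] by linarith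
  then have "y - k \<in> cbox 0 1"
    unfolding mem_box_cart k_def by (simp add: of_int_floor_le)
  ultimately have "f (y - k + k) = f (y - k)" and "f (y - k) = 0"
    using assms unfolding Zn_periodic_def by blast+
  then show ?thesis
    by simp
qed

text \<open>A function with vanishing Hessian is affine, and a periodic affine function is constant.\<close>
lemma Zn_periodic_hessian_eq_0_imp_constant:
  fixes w :: "real^'n::finite \<Rightarrow> real"
  assumes sw: "smooth w" and pw: "Zn_periodic w" and hw_cube: "\<And>x. x \<in> cbox 0 1 \<Longrightarrow> hessian w x = 0"
  obtains c where "\<And>x. w x = c"
proof -
  have "hessian w x $ a $ b = 0" for x a b
  proof (rule Zn_periodic_eq_0_if_eq_0_on_unit_cube[of "\<lambda>x. hessian w x $ a $ b"])
    show "Zn_periodic (\<lambda>x. hessian w x $ a $ b)"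
      using hessian_periodic[OF sw pw] unfolding Zn_periodic_def by simp
  qed (simp add: hw_cube)
  then have hw: "hessian w x = 0" for x
    by (simp add: vec_eq_iff)
  define cf where "cf a = partial a w 0" for a
  have cf: "partial a w x = cf a" for a x
  proof -
    have "(partial a w has_derivative (\<lambda>h. 0)) (at x within UNIV)" for x
      using has_derivative_partials[OF smooth_differentiable[OF smooth_partial[OF sw]], of a x] hw
      by (simp add: hessian_def vec_eq_iff)
    then obtain c where "\<forall>x. partial a w x = c"
      using has_derivative_zero_constant[of UNIV "partial a w"] by auto
    then show ?thesis
      unfolding cf_def by simp
  qed
  define cv :: "real^'n" where "cv = (\<chi> a. cf a)"
  define g where "g x = w x - cv \<bullet> x" for x
  have "(g has_derivative (\<lambda>h. 0)) (at x within UNIV)" for x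
  proof -
    have "(g has_derivative (\<lambda>h. (\<Sum>k\<in>UNIV. h $ k * cf k) - cv \<bullet> h)) (at x)"
      unfolding g_def[abs_def] using has_derivative_partials[OF smooth_differentiable[OF sw], of x]
      by (auto simp: cf intro!: derivative_eq_intros)
    moreover have "(\<lambda>h. (\<Sum>k\<in>UNIV. h $ k * cf k) - cv \<bullet> h) = (\<lambda>h. 0)"
      by (simp add: cv_def inner_vec_def mult.commute)
    ultimately show ?thesis
      by simp
  qed
  then obtain d where d: "\<And>x. g x = d"
    using has_derivative_zero_constant[of UNIV g] by auto
  have "cf a = 0" for a
  proof -
    have "w (0 + axis a 1) = w 0"
      using pw int_vec_axis[of a] unfolding Zn_periodic_def by blast
    then show ?thesis
      using d[of "axis a 1"] d[of 0] unfolding g_def by (simp add: inner_axis cv_def)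
  qed
  then have "w x = d" for x
    using d[of x] unfolding g_def cv_def by (simp add: inner_vec_def)
  then show ?thesis
    using that by blast
qed

lemma smooth_matrix_field_matrix_inv_hessian:
  assumes "smooth f" and "\<And>x. pos_def (hessian f x)"
  shows "smooth_matrix_field (\<lambda>x. matrix_inv (hessian f x))"
proof (rule smooth_matrix_field_matrix_inv[OF smooth_matrix_field_hessian[OF assms(1)]])
  show "det (hessian f x) \<noteq> 0" for x
    using pos_def_invertible[OF assms(2)] invertible_det_nz by blast
qed

lemma integral_double_sum:
  assumes "finite A" and "finite B" and "\<And>a b. a \<in> A \<Longrightarrow> b \<in> B \<Longrightarrow> f a b integrable_on S"
  shows "integral S (\<lambda>x. \<Sum>a\<in>A. \<Sum>b\<in>B. f a b x) = (\<Sum>a\<in>A. \<Sum>b\<in>B. integral S (f a b))"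
  using assms by (simp add: integral_sum integrable_sum)

lemma integral_trace_mult_hessian_by_parts:
  fixes P :: "real^'n::finite \<Rightarrow> real^'n^'n" and w :: "real^'n \<Rightarrow> real"
  assumes sP: "smooth_matrix_field P" and pP: "\<And>x k. int_vec k \<Longrightarrow> P (x + k) = P x"
    and sw: "smooth w" and pw: "Zn_periodic w"
  shows "integral (cbox 0 1) (\<lambda>x. trace (P x ** hessian w x))
    = integral (cbox 0 1) (\<lambda>x. double_divergence P x * w x)"
proof -
  define R where "R a b x = P x $ a $ b" for a b x
  have sR: "smooth (R a b)" for a b
    using sP unfolding smooth_matrix_field_def R_def by simp
  have pR: "Zn_periodic (R a b)" for a b
    using pP unfolding Zn_periodic_def R_def by simp
  have "integral (cbox 0 1) (\<lambda>x. R a b x * partial b (partial a w) x)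
      = integral (cbox 0 1) (\<lambda>x. partial a (partial b (R a b)) x * w x)" for a b
  proof -
    have "integral (cbox 0 1) (\<lambda>x. partial b (R a b) x * partial a w x)
        = - integral (cbox 0 1) (\<lambda>x. R a b x * partial b (partial a w) x)"
      by (rule integral_by_parts_periodic) (intro sR pR smooth_partial sw Zn_periodic_partial pw)+
    moreover have "integral (cbox 0 1) (\<lambda>x. partial a (partial b (R a b)) x * w x)
        = - integral (cbox 0 1) (\<lambda>x. partial b (R a b) x * partial a w x)"
      by (rule integral_by_parts_periodic) (intro sR pR smooth_partial sw Zn_periodic_partial pw)+
    ultimately show ?thesis
      by simp
  qed
  moreover have "trace (P x ** hessian w x) = (\<Sum>a\<in>UNIV. \<Sum>b\<in>UNIV. R a b x * partial b (partial a w) x)"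
    for x
    by (simp add: trace_def matrix_matrix_mult_def hessian_def R_def)
  moreover have "double_divergence P x * w x
      = (\<Sum>a\<in>UNIV. \<Sum>b\<in>UNIV. partial a (partial b (R a b)) x * w x)" for x
    unfolding double_divergence_def R_def by (simp add: sum_distrib_right)
  ultimately show ?thesis
    using sR sw
    by (simp add: integral_double_sum smooth_integrable_on smooth_mult smooth_partial)
qed

lemma continuous_nonpos_integral_unit_cube_eq_0:
  fixes g :: "real^'n::finite \<Rightarrow> real"
  assumes "continuous_on (cbox 0 1) g" and "\<And>x. x \<in> cbox 0 1 \<Longrightarrow> g x \<le> 0"
    and "integral (cbox 0 1) g = 0" and "x \<in> cbox 0 1"
  shows "g x = 0"
proof -
  have "((\<chi> i. 1/2) :: real^'n) \<in> box 0 1"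
    by (simp add: mem_box_cart)
  then have "box (0::real^'n) 1 \<noteq> {}"
    by blast
  moreover have "integral (cbox 0 1) (\<lambda>x. - g x) = 0"
    using assms(3) by (simp add: integral_neg)
  ultimately show ?thesis
    using integral_cbox_eq_0_iff[of 0 1 "\<lambda>x. - g x"] assms(1,2,4)
    by (simp add: continuous_on_minus)
qed

lemma abreu_op_eq_imp_hessian_eq:
  fixes u v w :: "real^'n::finite \<Rightarrow> real"
  assumes su: "smooth u" and sv: "smooth v"
    and pos: "\<And>x. pos_def (hessian u x)" "\<And>x. pos_def (hessian v x)"
    and per: "\<And>x k. int_vec k \<Longrightarrow> hessian u (x + k) = hessian u x"
      "\<And>x k. int_vec k \<Longrightarrow> hessian v (x + k) = hessian v x"
    and sw: "smooth w" and pw: "Zn_periodic w" and Hw: "\<And>x. hessian w x = hessian u x - hessian v x"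
    and abreu: "\<And>x. abreu_op u x = abreu_op v x"
    and x: "x \<in> cbox 0 1"
  shows "hessian u x = hessian v x"
proof -
  define P where "P = (\<lambda>x. matrix_inv (hessian u x) - matrix_inv (hessian v x))"
  have sym: "transpose (hessian u x) = hessian u x" "transpose (hessian v x) = hessian v x" for x
    using su sv by (simp_all add: hessian_symmetric)
  have sPu: "smooth_matrix_field (\<lambda>x. matrix_inv (hessian u x))"
    and sPv: "smooth_matrix_field (\<lambda>x. matrix_inv (hessian v x))"
    using su sv pos by (simp_all add: smooth_matrix_field_matrix_inv_hessian)
  then have sP: "smooth_matrix_field P"
    unfolding P_def by (rule smooth_matrix_field_diff)
  moreover have "P (x + k) = P x" if "int_vec k" for x k
    unfolding P_def using per that by simp
  moreover have "double_divergence P x = abreu_op u x - abreu_op v x" for x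
    unfolding P_def abreu_op_eq_double_divergence by (rule double_divergence_diff[OF sPu sPv])
  ultimately have "integral (cbox 0 1) (\<lambda>x. trace (P x ** hessian w x)) = 0"
    using integral_trace_mult_hessian_by_parts[OF _ _ sw pw] abreu by simp
  moreover have "continuous_on (cbox 0 1) (\<lambda>x. trace (P x ** hessian w x))"
    using sP sw by (simp add: smooth_continuous_on smooth_trace_mult smooth_matrix_field_hessian)
  moreover have "trace (P x ** hessian w x) \<le> 0" for x
    unfolding P_def Hw using trace_matrix_inv_diff_nonpos[OF pos sym] by simp
  ultimately have "trace (P x ** hessian w x) = 0"
    using continuous_nonpos_integral_unit_cube_eq_0 x by blast
  then show ?thesis
    using trace_matrix_inv_diff_eq_0_imp_eq[OF pos sym] unfolding P_def Hw by simp
qed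

theorem mainTheorem4:
  fixes A \<phi>0 \<phi>1 :: "real^'n::finite \<Rightarrow> real"
  assumes "smooth A" and "Zn_periodic A"
    and "smooth \<phi>0" and "Zn_periodic \<phi>0"
    and "smooth \<phi>1" and "Zn_periodic \<phi>1"
    and "u = (\<lambda>x. (1/2) * (norm x)\<^sup>2 + \<phi>0 x)"
    and "v = (\<lambda>x. (1/2) * (norm x)\<^sup>2 + \<phi>1 x)"
    and "convex_on UNIV u" and "convex_on UNIV v"
    and "\<forall>x. pos_def (hessian u x)" and "\<forall>x. pos_def (hessian v x)"
    and "\<forall>x. abreu_op u x = A x" and "\<forall>x. abreu_op v x = A x"
  shows "\<exists>c. \<forall>x. \<phi>0 x = \<phi>1 x + c"
proof -
  define w where "w = (\<lambda>x. \<phi>0 x - \<phi>1 x)"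
  have su: "smooth u" and sv: "smooth v"
    unfolding assms(7,8) by (intro smooth_add smooth_half_norm_square assms(3,5))+
  have sw: "smooth w" and pw: "Zn_periodic w"
    using assms(3-6) unfolding w_def Zn_periodic_def by (simp_all add: smooth_diff)
  have Hu: "hessian u x = mat 1 + hessian \<phi>0 x" and Hv: "hessian v x = mat 1 + hessian \<phi>1 x" for x
    unfolding assms(7,8) by (intro hessian_half_norm_square_add assms(3,5))+
  have Hw: "hessian w x = hessian u x - hessian v x" for x
    unfolding w_def Hu Hv using assms(3,5) by (simp add: hessian_diff)
  have "hessian w x = 0" if "x \<in> cbox 0 1" for x
  proof -
    have "hessian u x = hessian v x"
    proof (rule abreu_op_eq_imp_hessian_eq[OF su sv _ _ _ _ sw pw Hw _ that])
      show "hessian u (y + k) = hessian u y" "hessian v (y + k) = hessian v y" if "int_vec k" for y k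
        unfolding Hu Hv using assms(3-6) that by (simp_all add: hessian_periodic)
    qed (use assms(11-14) in simp_all)
    then show ?thesis
      by (simp add: Hw)
  qed
  then obtain c where "\<And>x. w x = c"
    using Zn_periodic_hessian_eq_0_imp_constant[OF sw pw] by blast
  then show ?thesis
    unfolding w_def by (metis add.commute diff_eq_eq)
qed

end
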